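(* Let $s\le L$ be positive integers, $\mathbf{D}\in\mathbb{R}^{N\times N}$, $\mathbf{H}\in\mathbb{R}^{N\times L}$, and consider the system $\mathbf{x}_k=\mathbf{D}\mathbf{x}_{k-1}+\mathbf{H}\mathbf{h}_k$ where the inputs $\mathbf{h}_k\in\mathbb{R}^L$ are $s$-sparse with a common support, i.e. there is a fixed $\mathcal{S}\subseteq\{1,\dots,L\}$ with $|\mathcal{S}|=s$ such that all nonzero entries of every $\mathbf{h}_k$ lie in $\mathcal{S}$. Suppose the system is controllable using $s$-sparse inputs with a common support, and let $K^*$ be the minimum number of such input vectors required to steer the system from any initial state to any final state. With $R^*_{\mathbf{H},s}=\min\{\operatorname{rank}(\mathbf{H}),s\}$ and $q$ the degree of the minimal polynomial of $\mathbf{D}$, $$\frac{N}{R^*_{\mathbf{H},s}}\le K^*\le\min\{q,\ N-R^*_{\mathbf{H},s}+1\}\le N.$$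
   Context: The system is controllable using $s$-sparse inputs with a common support if there exists $\mathcal{S}\subseteq\{1,\dots,L\}$, $|\mathcal{S}|=s$, such that for every initial state $\mathbf{x}_0$ and final state $\mathbf{x}_{\mathrm{final}}$ in $\mathbb{R}^N$ there exist finite $K$ and inputs $\mathbf{h}_1,\dots,\mathbf{h}_K$ supported in $\mathcal{S}$ with $\mathbf{x}_K=\mathbf{x}_{\mathrm{final}}$; equivalently the pair $(\mathbf{D},\mathbf{H}_{\mathcal{S}})$ is controllable, where $\mathbf{H}_{\mathcal{S}}$ denotes the columns of $\mathbf{H}$ indexed by $\mathcal{S}$. *)

theory Defs
  imports "HOL-Analysis.Analysis" "HOL-Computational_Algebra.Polynomial"
begin

fun matpow :: "real^'n^'n \<Rightarrow> nat \<Rightarrow> real^'n^'n" where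
  "matpow D 0 = mat 1"
| "matpow D (Suc k) = D ** matpow D k"

definition poly_mat :: "real poly \<Rightarrow> real^'n^'n \<Rightarrow> real^'n^'n" where
  "poly_mat p D = (\<Sum>i\<le>degree p. coeff p i *\<^sub>R matpow D i)"

definition min_poly_degree :: "real^'n^'n \<Rightarrow> nat" where
  "min_poly_degree D = (LEAST d. \<exists>p. lead_coeff p = 1 \<and> degree p = d \<and> poly_mat p D = 0)"

fun sys_state :: "real^'n^'n \<Rightarrow> real^'l^'n \<Rightarrow> real^'n \<Rightarrow> (nat \<Rightarrow> real^'l) \<Rightarrow> nat \<Rightarrow> real^'n" where
  "sys_state D H x0 h 0 = x0"
| "sys_state D H x0 h (Suc k) = D *v sys_state D H x0 h k + H *v h (Suc k)"

definition supported_in :: "'l set \<Rightarrow> (nat \<Rightarrow> real^'l) \<Rightarrow> nat \<Rightarrow> bool" where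
  "supported_in S h K \<longleftrightarrow> (\<forall>k\<in>{1..K}. \<forall>j. j \<notin> S \<longrightarrow> h k $ j = 0)"

definition steerable_in :: "real^'n^'n \<Rightarrow> real^'l^'n \<Rightarrow> 'l set \<Rightarrow> nat \<Rightarrow> bool" where
  "steerable_in D H S K \<longleftrightarrow>
     (\<forall>x0 xf. \<exists>h. supported_in S h K \<and> sys_state D H x0 h K = xf)"

definition sparse_controllable :: "real^'n^'n \<Rightarrow> real^'l^'n \<Rightarrow> nat \<Rightarrow> bool" where
  "sparse_controllable D H s \<longleftrightarrow>
     (\<exists>S::'l set. card S = s \<and> (\<forall>x0 xf. \<exists>K h. supported_in S h K \<and> sys_state D H x0 h K = xf))"

definition min_sparse_inputs :: "real^'n^'n \<Rightarrow> real^'l^'n \<Rightarrow> nat \<Rightarrow> nat" where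
  "min_sparse_inputs D H s = (LEAST K. \<exists>S::'l set. card S = s \<and> steerable_in D H S K)"

end

(*
  Inputs supported in S enter through the column space W of H_S, so the states reachable
  from 0 in K steps form the Krylov space W + D W + ... + D^(K-1) W, and steering in K steps
  means that this space is everything.  Each step adds at most dim W <= min(rank H, s)
  dimensions, giving the lower bound.  The Krylov chain grows strictly until it stabilises,
  and once stable it is everything; it stabilises by step q because D^q is a combination of
  lower powers, and by step N - dim W + 1 by counting dimensions.  Finally S can be traded
  for a support of the same size whose column space contains the old one and has the
  maximal dimension min(rank H, s).
*)
theory Submission
  imports Defs
begin

section \<open>Polynomials evaluated at a matrix\<close>

lemma matrix_vector_mult_sum_left:
  "(\<Sum>i\<in>I. A i :: real^'n^'m) *v x = (\<Sum>i\<in>I. A i *v x)"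
  by (induction I rule: infinite_finite_induct) (auto simp: matrix_vector_mult_add_rdistrib)

lemma poly_mat_eq_sum:
  assumes "degree p \<le> M"
  shows "poly_mat p D = (\<Sum>i\<le>M. coeff p i *\<^sub>R matpow D i)"
  unfolding poly_mat_def
  by (rule sum.mono_neutral_left) (use assms in \<open>auto simp: coeff_eq_0\<close>)

lemma poly_mat_smult: "poly_mat (smult c p) D = c *\<^sub>R poly_mat p D"
proof (cases "c = 0")
  case False
  then show ?thesis by (simp add: poly_mat_def scaleR_sum_right)
qed (simp add: poly_mat_def)

lemma poly_mat_mult_vec:
  "poly_mat p D *v x = (\<Sum>i\<le>degree p. coeff p i *\<^sub>R (matpow D i *v x))"
  by (simp add: poly_mat_def matrix_vector_mult_sum_left scaleR_matrix_vector_assoc)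

lemma ex_nontrivial_linear_relation:
  fixes f :: "nat \<Rightarrow> 'a::euclidean_space"
  shows "\<exists>M c. (\<exists>i\<le>M. c i \<noteq> 0) \<and> (\<Sum>i\<le>M. c i *\<^sub>R f i) = 0"
proof (cases "inj_on f {..DIM('a)}")
  case False
  then obtain i j where ij: "i \<le> DIM('a)" "j \<le> DIM('a)" "i \<noteq> j" "f i = f j"
    unfolding inj_on_def by auto
  define c where "c k = (if k = i then 1 else 0) - (if k = j then 1 else (0::real))" for k
  have "(\<Sum>k\<le>DIM('a). c k *\<^sub>R f k) = f i - f j"
    using ij(1,2) by (simp add: c_def scaleR_diff_left sum_subtractf if_distrib[of "\<lambda>x. x *\<^sub>R _"]
        cong: if_cong)
  with ij show ?thesis by (intro exI[of _ "DIM('a)"] exI[of _ c]) (auto simp: c_def)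
next
  case True
  then have "card (f ` {..DIM('a)}) > DIM('a)"
    by (simp add: card_image)
  then have "dependent (f ` {..DIM('a)})"
    using independent_bound by fastforce
  then obtain u where u: "\<exists>v\<in>f ` {..DIM('a)}. u v \<noteq> 0" "(\<Sum>v\<in>f ` {..DIM('a)}. u v *\<^sub>R v) = 0"
    using dependent_finite[of "f ` {..DIM('a)}"] by blast
  then have "(\<Sum>k\<le>DIM('a). u (f k) *\<^sub>R f k) = 0"
    by (simp add: sum.reindex[OF True])
  with u(1) show ?thesis by (intro exI[of _ "DIM('a)"] exI[of _ "u \<circ> f"]) auto
qed

lemma ex_monic_annihilating_poly:
  fixes D :: "real^'n^'n"
  shows "\<exists>p. lead_coeff p = 1 \<and> poly_mat p D = 0"
proof -
  obtain M c where c: "\<exists>i\<le>M. c i \<noteq> 0" "(\<Sum>i\<le>M. c i *\<^sub>R matpow D i) = 0"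
    using ex_nontrivial_linear_relation by blast
  define p0 :: "real poly" where "p0 = (\<Sum>i\<le>M. monom (c i) i)"
  have coeff_p0: "coeff p0 k = (if k \<le> M then c k else 0)" for k
    unfolding p0_def coeff_sum coeff_monom by simp
  have "degree p0 \<le> M"
    by (rule degree_le) (simp add: coeff_p0)
  then have "poly_mat p0 D = 0"
    using c(2) by (simp add: poly_mat_eq_sum coeff_p0)
  moreover have "p0 \<noteq> 0"
    using c(1) coeff_p0 by (metis coeff_0)
  ultimately show ?thesis
    by (intro exI[of _ "smult (inverse (lead_coeff p0)) p0"]) (simp add: poly_mat_smult)
qed

lemma ex_min_poly:
  fixes D :: "real^'n^'n"
  shows "\<exists>p. lead_coeff p = 1 \<and> degree p = min_poly_degree D \<and> poly_mat p D = 0"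
  unfolding min_poly_degree_def
  by (rule LeastI_ex) (use ex_monic_annihilating_poly[of D] in blast)

section \<open>Krylov subspaces\<close>

definition krylov_space :: "real^'n^'n \<Rightarrow> (real^'n) set \<Rightarrow> nat \<Rightarrow> (real^'n) set" where
  "krylov_space D W K = span (\<Union>i<K. (\<lambda>w. matpow D i *v w) ` W)"

lemma subspace_krylov_space: "subspace (krylov_space D W K)"
  by (simp add: krylov_space_def)

lemma span_krylov_space [simp]: "span (krylov_space D W K) = krylov_space D W K"
  by (simp add: krylov_space_def)

lemma matpow_in_krylov_space: "i < K \<Longrightarrow> w \<in> W \<Longrightarrow> matpow D i *v w \<in> krylov_space D W K"
  unfolding krylov_space_def by (intro span_base) blast

lemma krylov_space_0 [simp]: "krylov_space D W 0 = {0}"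
  by (simp add: krylov_space_def)

lemma krylov_space_Suc:
  "krylov_space D W (Suc K) = {w + D *v z | w z. w \<in> span W \<and> z \<in> krylov_space D W K}"
proof -
  have "(\<Union>i<Suc K. (\<lambda>w. matpow D i *v w) ` W) = W \<union> (*v) D ` (\<Union>i<K. (\<lambda>w. matpow D i *v w) ` W)"
    by (simp add: lessThan_Suc_eq_insert_0 image_UN image_image matrix_vector_mul_assoc)
  then show ?thesis
    unfolding krylov_space_def
    by (simp add: span_Un linear_span_image[OF matrix_vector_mul_linear]) blast
qed

lemma krylov_space_mono:
  assumes "K \<le> M" "W \<subseteq> W'"
  shows "krylov_space D W K \<subseteq> krylov_space D W' M"
  unfolding krylov_space_def using assms by (intro span_mono UN_mono image_mono) auto

lemma krylov_space_subset_if_Suc_eq: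
  assumes "krylov_space D W (Suc K) = krylov_space D W K"
  shows "krylov_space D W M \<subseteq> krylov_space D W K"
proof -
  have "krylov_space D W (K + n) = krylov_space D W K" for n
  proof (induction n)
    case (Suc n)
    then show ?case
      using assms by (simp add: krylov_space_Suc)
  qed simp
  then show ?thesis
    using krylov_space_mono[of M "K + M" W W D] by auto
qed

lemma dim_krylov_space_le: "dim (krylov_space D W K) \<le> K * dim W"
proof (induction K)
  case (Suc K)
  let ?DZ = "(*v) D ` krylov_space D W K"
  have "krylov_space D W (Suc K) = {x + y | x y. x \<in> span W \<and> y \<in> ?DZ}"
    by (auto simp: krylov_space_Suc)
  then have "dim (krylov_space D W (Suc K)) \<le> dim W + dim ?DZ"
    using dim_sums_Int[OF subspace_span linear_subspace_image[OF matrix_vector_mul_linear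
          subspace_krylov_space], of W D D W K] by simp
  also have "\<dots> \<le> dim W + dim (krylov_space D W K)"
    using dim_image_le[OF matrix_vector_mul_linear] by simp
  finally show ?case
    using Suc by simp
qed simp

lemma krylov_space_eq_UNIV_if_Suc_eq:
  assumes "krylov_space D W K0 = UNIV" "krylov_space D W (Suc K) = krylov_space D W K"
  shows "krylov_space D W K = UNIV"
  using krylov_space_subset_if_Suc_eq[OF assms(2), of K0] assms(1) by blast

lemma dim_krylov_space_ge:
  assumes "krylov_space D W K0 = UNIV" "krylov_space D W (Suc k) \<noteq> UNIV"
  shows "dim W + k \<le> dim (krylov_space D W (Suc k))"
  using assms(2)
proof (induction k)
  case 0
  then show ?case by (simp add: krylov_space_Suc)
next
  case (Suc k)
  have mono: "krylov_space D W (Suc k) \<subseteq> krylov_space D W (Suc (Suc k))"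
    by (rule krylov_space_mono) auto
  then have "krylov_space D W (Suc k) \<noteq> UNIV"
    using Suc.prems by blast
  moreover have "krylov_space D W (Suc k) \<subset> krylov_space D W (Suc (Suc k))"
    using mono Suc.prems krylov_space_eq_UNIV_if_Suc_eq[OF assms(1)] by blast
  then have "dim (krylov_space D W (Suc k)) < dim (krylov_space D W (Suc (Suc k)))"
    by (intro dim_psubset) simp
  ultimately show ?case
    using Suc.IH by simp
qed

lemma krylov_space_codim_bound:
  fixes D :: "real^'n^'n"
  assumes "krylov_space D W K0 = UNIV"
  shows "krylov_space D W (CARD('n) - dim W + 1) = UNIV"
proof (rule ccontr)
  let ?Z = "krylov_space D W (CARD('n) - dim W + 1)"
  assume "?Z \<noteq> UNIV"
  then have "CARD('n) \<le> dim ?Z"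
    using dim_krylov_space_ge[OF assms, of "CARD('n) - dim W"] dim_subset_UNIV_cart[of W] by simp
  then have "dim ?Z = DIM(real^'n)"
    using dim_subset_UNIV_cart[of ?Z] by simp
  then have "span ?Z = UNIV"
    using dim_eq_full by blast
  with \<open>?Z \<noteq> UNIV\<close> show False
    by simp
qed

lemma krylov_space_Suc_degree_eq_if_annihilating:
  assumes "lead_coeff p = 1" "poly_mat p D = 0"
  shows "krylov_space D W (Suc (degree p)) = krylov_space D W (degree p)"
proof -
  have "matpow D (degree p) *v w \<in> krylov_space D W (degree p)" if "w \<in> W" for w
  proof -
    have "0 = poly_mat p D *v w"
      using assms(2) by simp
    also have "\<dots> = (\<Sum>i<degree p. coeff p i *\<^sub>R (matpow D i *v w)) + matpow D (degree p) *v w"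
      using assms(1) by (simp add: poly_mat_mult_vec lessThan_Suc_atMost[symmetric])
    finally have "matpow D (degree p) *v w = - (\<Sum>i<degree p. coeff p i *\<^sub>R (matpow D i *v w))"
      by (simp add: eq_neg_iff_add_eq_0 add.commute)
    also have "\<dots> \<in> krylov_space D W (degree p)"
      using that subspace_krylov_space
      by (intro subspace_neg subspace_sum subspace_scale matpow_in_krylov_space) auto
    finally show ?thesis .
  qed
  then have "(\<Union>i<Suc (degree p). (\<lambda>w. matpow D i *v w) ` W) \<subseteq> krylov_space D W (degree p)"
    by (auto simp: less_Suc_eq matpow_in_krylov_space)
  then have "krylov_space D W (Suc (degree p)) \<subseteq> krylov_space D W (degree p)"
    unfolding krylov_space_def[of D W "Suc (degree p)"]
    by (rule span_minimal[OF _ subspace_krylov_space])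
  then show ?thesis
    using krylov_space_mono[of "degree p" "Suc (degree p)" W W D] by auto
qed

section \<open>Reachable sets of the sparse-input system\<close>

definition column_span :: "real^'l^'n \<Rightarrow> 'l set \<Rightarrow> (real^'n) set" where
  "column_span H S = span ((\<lambda>j. column j H) ` S)"

lemma span_column_span [simp]: "span (column_span H S) = column_span H S"
  by (simp add: column_span_def)

lemma column_span_eq_image_supported:
  fixes H :: "real^'l^'n"
  shows "column_span H S = {H *v u | u. \<forall>j. j \<notin> S \<longrightarrow> u $ j = 0}" (is "_ = ?V")
proof
  have "subspace {u :: real^'l. \<forall>j. j \<notin> S \<longrightarrow> u $ j = 0}"
    by (auto simp: subspace_def)
  then have "subspace ?V"
    using linear_subspace_image[OF matrix_vector_mul_linear, of _ H] by (simp add: setcompr_eq_image)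
  moreover have "column j H \<in> ?V" if "j \<in> S" for j
  proof -
    have "\<forall>i. i \<notin> S \<longrightarrow> axis j 1 $ i = (0::real)"
      using that by (auto simp: axis_def)
    moreover have "column j H = H *v axis j 1"
      by (simp add: matrix_vector_mult_basis)
    ultimately show ?thesis
      by blast
  qed
  ultimately show "column_span H S \<subseteq> ?V"
    unfolding column_span_def by (intro span_minimal image_subsetI)
next
  show "?V \<subseteq> column_span H S"
  proof (intro subsetI, elim CollectE exE conjE)
    fix u y
    assume y: "y = H *v u" and u: "\<forall>j. j \<notin> S \<longrightarrow> u $ j = 0"
    have "H *v u = (\<Sum>j\<in>S. u $ j *\<^sub>R column j H)"
      unfolding matrix_mult_sum scalar_mult_eq_scaleR
      by (rule sum.mono_neutral_right) (use u in auto)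
    also have "\<dots> \<in> column_span H S"
      unfolding column_span_def by (intro span_sum span_scale span_base imageI)
    finally show "y \<in> column_span H S"
      using y by simp
  qed
qed

lemma sys_state_cong:
  "(\<And>k. k \<in> {1..K} \<Longrightarrow> h k = h' k) \<Longrightarrow> sys_state D H x0 h K = sys_state D H x0 h' K"
  by (induction K) auto

lemma sys_state_superposition:
  "sys_state D H x0 h K = matpow D K *v x0 + sys_state D H 0 h K"
  by (induction K) (simp_all add: matrix_vector_mul_lid matrix_vector_right_distrib
      matrix_vector_mul_assoc)

lemma supported_in_Suc:
  "supported_in S h (Suc K) \<longleftrightarrow> supported_in S h K \<and> (\<forall>j. j \<notin> S \<longrightarrow> h (Suc K) $ j = 0)"
  by (auto simp: supported_in_def le_Suc_eq)

lemma reachable_eq_krylov_space: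
  "{sys_state D H 0 h K | h. supported_in S h K} = krylov_space D (column_span H S) K"
proof (induction K)
  case 0
  show ?case by (simp add: supported_in_def)
next
  case (Suc K)
  have "sys_state D H 0 h (Suc K) \<in> krylov_space D (column_span H S) (Suc K)"
    if "supported_in S h (Suc K)" for h
  proof -
    have "H *v h (Suc K) \<in> column_span H S"
      using that unfolding supported_in_Suc column_span_eq_image_supported by blast
    moreover have "sys_state D H 0 h K \<in> {sys_state D H 0 h K | h. supported_in S h K}"
      using that unfolding supported_in_Suc by blast
    moreover have "sys_state D H 0 h (Suc K) = H *v h (Suc K) + D *v sys_state D H 0 h K"
      by (simp add: add.commute)
    ultimately show ?thesis
      unfolding krylov_space_Suc span_column_span Suc.IH by blast
  qed
  moreover have "y \<in> {sys_state D H 0 h (Suc K) | h. supported_in S h (Suc K)}"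
    if "y \<in> krylov_space D (column_span H S) (Suc K)" for y
  proof -
    have "y \<in> {w + D *v z | w z. w \<in> column_span H S \<and> z \<in> krylov_space D (column_span H S) K}"
      using that by (simp only: krylov_space_Suc span_column_span)
    then obtain w z where "y = w + D *v z" "w \<in> column_span H S"
      and z: "z \<in> krylov_space D (column_span H S) K"
      by blast
    then obtain u where y: "y = H *v u + D *v z" "\<forall>j. j \<notin> S \<longrightarrow> u $ j = 0"
      unfolding column_span_eq_image_supported by blast
    obtain h where h: "supported_in S h K" "z = sys_state D H 0 h K"
      using z Suc.IH by blast
    have "sys_state D H 0 (h(Suc K := u)) K = z"
      unfolding h(2) by (rule sys_state_cong) simp
    moreover have "supported_in S (h(Suc K := u)) (Suc K)"
      using h(1) y(2) by (auto simp: supported_in_def le_Suc_eq)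
    ultimately show ?thesis
      using y(1) by (intro CollectI exI[of _ "h(Suc K := u)"]) (simp add: add.commute)
  qed
  ultimately show ?case
    by blast
qed

lemma steerable_in_iff_krylov_space:
  "steerable_in D H S K \<longleftrightarrow> krylov_space D (column_span H S) K = UNIV"
  unfolding steerable_in_def reachable_eq_krylov_space[symmetric]
proof (intro iffI allI)
  assume steer: "\<forall>x0 xf. \<exists>h. supported_in S h K \<and> sys_state D H x0 h K = xf"
  have "y \<in> {sys_state D H 0 h K | h. supported_in S h K}" for y
    using steer[rule_format, of 0 y] by blast
  then show "{sys_state D H 0 h K | h. supported_in S h K} = UNIV"
    by blast
next
  fix x0 xf
  assume "{sys_state D H 0 h K | h. supported_in S h K} = UNIV"
  then have "xf - matpow D K *v x0 \<in> {sys_state D H 0 h K | h. supported_in S h K}"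
    by simp
  then obtain h where h: "xf - matpow D K *v x0 = sys_state D H 0 h K" "supported_in S h K"
    unfolding mem_Collect_eq by (elim exE conjE)
  have "sys_state D H x0 h K = matpow D K *v x0 + (xf - matpow D K *v x0)"
    unfolding h(1) by (rule sys_state_superposition)
  with h(2) show "\<exists>h. supported_in S h K \<and> sys_state D H x0 h K = xf"
    by (intro exI[of _ h]) simp
qed

lemma ex_steerable_in:
  fixes D :: "real^'n^'n"
  assumes "\<forall>x0 xf. \<exists>K h. supported_in S h K \<and> sys_state D H x0 h K = xf"
  shows "\<exists>K. steerable_in D H S K"
proof -
  have "\<forall>b. \<exists>K. b \<in> krylov_space D (column_span H S) K"
  proof
    fix b
    obtain K h where "supported_in S h K" "sys_state D H 0 h K = b"
      using assms by blast
    then show "\<exists>K. b \<in> krylov_space D (column_span H S) K"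
      unfolding reachable_eq_krylov_space[symmetric] by blast
  qed
  then obtain Kb where Kb: "\<forall>b. b \<in> krylov_space D (column_span H S) (Kb b)"
    by (rule choice[THEN exE])
  define K where "K = Max (Kb ` Basis)"
  have "b \<in> krylov_space D (column_span H S) K" if "b \<in> Basis" for b
  proof -
    have "Kb b \<le> K"
      unfolding K_def using that by (intro Max_ge) auto
    then show ?thesis
      using Kb krylov_space_mono[OF _ order_refl] by blast
  qed
  then have "Basis \<subseteq> krylov_space D (column_span H S) K"
    by blast
  then have "span Basis \<subseteq> krylov_space D (column_span H S) K"
    by (rule span_minimal) (rule subspace_krylov_space)
  then show ?thesis
    by (auto simp: steerable_in_iff_krylov_space)
qed

lemma dim_column_span_le:
  fixes H :: "real^'l^'n"
  shows "dim (column_span H S) \<le> min (rank H) (card S)"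
proof -
  have "column_span H S \<subseteq> span (columns H)"
    unfolding column_span_def columns_def by (intro span_mono) auto
  then have "dim (column_span H S) \<le> rank H"
    unfolding column_rank_def by (metis dim_span dim_subset)
  moreover have "dim ((\<lambda>j. column j H) ` S) \<le> card S"
    using dim_le_card'[of "(\<lambda>j. column j H) ` S"] card_image_le[of S "\<lambda>j. column j H"]
    by (simp add: le_trans)
  then have "dim (column_span H S) \<le> card S"
    unfolding column_span_def by simp
  ultimately show ?thesis
    by simp
qed

text \<open>Extend a basis of the columns indexed by S to a basis of all columns, keep
  min(rank H, card S) of its vectors, and pad their index set to size card S.\<close>

lemma ex_column_span_max_dim:
  fixes H :: "real^'l^'n" and S :: "'l set"
  shows "\<exists>S'. card S' = card S \<and> column_span H S \<subseteq> column_span H S'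
           \<and> dim (column_span H S') = min (rank H) (card S)"
proof -
  let ?col = "\<lambda>j. column j H"
  let ?r = "min (rank H) (card S)"
  obtain B0 where B0: "B0 \<subseteq> ?col ` S" "independent B0" "?col ` S \<subseteq> span B0"
    using maximal_independent_subset by blast
  obtain B where B: "B0 \<subseteq> B" "B \<subseteq> columns H" "independent B" "columns H \<subseteq> span B"
    using maximal_independent_subset_extend[of B0 "columns H"] B0(1,2)
    unfolding columns_def by blast
  have "card B0 = dim (?col ` S)"
    using basis_card_eq_dim[OF B0(1,3,2)] .
  then have "card B0 \<le> ?r"
    using dim_column_span_le[of H S] unfolding column_span_def by simp
  moreover have "?r \<le> card B"
    using basis_card_eq_dim[OF B(2,4,3)] column_rank_def[of H] by simp
  ultimately obtain B' where B': "B0 \<subseteq> B'" "B' \<subseteq> B" "card B' = ?r"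
    using exists_subset_between[OF _ _ B(1) finiteI_independent[OF B(3)]] by blast
  have "columns H = range ?col"
    unfolding columns_def by blast
  then have "B' \<subseteq> range ?col"
    using B'(2) B(2) by (metis order_trans)
  then obtain T where T: "inj_on ?col T" "B' = ?col ` T"
    by (meson subset_image_inj)
  have "card T \<le> card S"
    using B'(3) card_image[OF T(1)] T(2) by simp
  moreover have "card S \<le> card (UNIV :: 'l set)"
    by (rule card_mono) simp_all
  ultimately obtain S' where S': "T \<subseteq> S'" "card S' = card S"
    using exists_subset_between[OF _ _ subset_UNIV finite] by blast
  have B'_sub: "B' \<subseteq> column_span H S'"
    unfolding column_span_def T(2) using S'(1) by (meson image_mono span_superset order_trans)
  then have "?r \<le> dim (column_span H S')"
    using independent_card_le_dim[OF B'_sub independent_mono[OF B(3) B'(2)]] B'(3) by simp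
  moreover have "column_span H S \<subseteq> column_span H S'"
  proof -
    have "?col ` S \<subseteq> span B'"
      using B0(3) B'(1) span_mono by blast
    also have "\<dots> \<subseteq> column_span H S'"
      using B'_sub by (rule span_minimal) (simp add: column_span_def)
    finally show ?thesis
      unfolding column_span_def[of H S] by (rule span_minimal) (simp add: column_span_def)
  qed
  ultimately show ?thesis
    using dim_column_span_le[of H S'] S'(2) by (intro exI[of _ S']) (simp add: le_antisym)
qed

section \<open>Bounds on the number of steering inputs\<close>

lemma steerable_in_card_le:
  fixes D :: "real^'n^'n"
  assumes "steerable_in D H S K"
  shows "CARD('n) \<le> K * min (rank H) (card S)"
proof -
  have "krylov_space D (column_span H S) K = UNIV"
    using assms unfolding steerable_in_iff_krylov_space .
  then have "CARD('n) = dim (krylov_space D (column_span H S) K)"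
    by simp
  also have "\<dots> \<le> K * dim (column_span H S)"
    by (rule dim_krylov_space_le)
  also have "\<dots> \<le> K * min (rank H) (card S)"
    using dim_column_span_le by (rule mult_le_mono2)
  finally show ?thesis .
qed

lemma steerable_in_min_poly_degree:
  assumes "steerable_in D H S K"
  shows "steerable_in D H S (min_poly_degree D)"
proof -
  obtain p where p: "lead_coeff p = 1" "degree p = min_poly_degree D" "poly_mat p D = 0"
    using ex_min_poly by blast
  have full: "krylov_space D (column_span H S) K = UNIV"
    using assms unfolding steerable_in_iff_krylov_space .
  have "krylov_space D (column_span H S) (Suc (min_poly_degree D))
      = krylov_space D (column_span H S) (min_poly_degree D)"
    using krylov_space_Suc_degree_eq_if_annihilating[OF p(1,3)] unfolding p(2) .
  then show ?thesis
    unfolding steerable_in_iff_krylov_space by (rule krylov_space_eq_UNIV_if_Suc_eq[OF full])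
qed

lemma steerable_in_dim_column_span:
  fixes D :: "real^'n^'n"
  assumes "steerable_in D H S K"
  shows "steerable_in D H S (CARD('n) - dim (column_span H S) + 1)"
  using assms unfolding steerable_in_iff_krylov_space by (rule krylov_space_codim_bound)

lemma steerable_in_column_span_mono:
  assumes "column_span H S \<subseteq> column_span H S'" "steerable_in D H S K"
  shows "steerable_in D H S' K"
  using assms(2) krylov_space_mono[OF order_refl assms(1), of D K]
  unfolding steerable_in_iff_krylov_space by auto

lemma min_sparse_inputs_le:
  assumes "card S = s" "steerable_in D H S K"
  shows "min_sparse_inputs D H s \<le> K"
proof -
  have "\<exists>S. card S = s \<and> steerable_in D H S K"
    using assms by blast
  then show ?thesis
    unfolding min_sparse_inputs_def by (rule Least_le)
qed

lemma steerable_in_min_sparse_inputs: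
  assumes "card S = s" "steerable_in D H S K"
  shows "\<exists>S'. card S' = s \<and> steerable_in D H S' (min_sparse_inputs D H s)"
proof -
  have "\<exists>K S. card S = s \<and> steerable_in D H S K"
    using assms by blast
  then show ?thesis
    unfolding min_sparse_inputs_def by (rule LeastI_ex)
qed

theorem corollary3:
  fixes D :: "real^'n^'n" and H :: "real^'l^'n" and s :: nat
  assumes "0 < s" and "s \<le> CARD('l)"
    and "sparse_controllable D H s"
  shows "real CARD('n) / real (min (rank H) s) \<le> real (min_sparse_inputs D H s)
       \<and> min_sparse_inputs D H s \<le> min (min_poly_degree D) (CARD('n) - min (rank H) s + 1)
       \<and> min (min_poly_degree D) (CARD('n) - min (rank H) s + 1) \<le> CARD('n)"
proof -
  let ?K = "min_sparse_inputs D H s"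
  let ?r = "min (rank H) s"
  obtain S0 where S0: "card S0 = s" "\<forall>x0 xf. \<exists>K h. supported_in S0 h K \<and> sys_state D H x0 h K = xf"
    using assms(3) unfolding sparse_controllable_def by blast
  obtain K0 where K0: "steerable_in D H S0 K0"
    using ex_steerable_in[OF S0(2)] by blast
  obtain S where S: "card S = s" "steerable_in D H S ?K"
    using steerable_in_min_sparse_inputs[OF S0(1) K0] by blast
  have lower: "CARD('n) \<le> ?K * ?r"
    using steerable_in_card_le[OF S(2)] S(1) by simp
  have "0 < ?r"
  proof (rule gr0I)
    assume "?r = 0"
    with lower show False
      by simp
  qed
  then have "real CARD('n) / real ?r \<le> real ?K"
    using lower by (simp add: divide_le_eq flip: of_nat_mult)
  moreover obtain S1 where S1: "card S1 = s" "column_span H S0 \<subseteq> column_span H S1"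
    "dim (column_span H S1) = ?r"
    using ex_column_span_max_dim[of S0 H] S0(1) by blast
  have "?K \<le> CARD('n) - ?r + 1"
    using min_sparse_inputs_le[OF S1(1) steerable_in_dim_column_span[OF
          steerable_in_column_span_mono[OF S1(2) K0]]] S1(3) by simp
  moreover have "?K \<le> min_poly_degree D"
    using min_sparse_inputs_le[OF S0(1) steerable_in_min_poly_degree[OF K0]] .
  moreover have "CARD('n) - ?r + 1 \<le> CARD('n)"
    using \<open>0 < ?r\<close> zero_less_card_finite[where 'a='n] by linarith
  ultimately show ?thesis
    by (simp add: min.coboundedI2)
qed

end
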